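(* Let $R$ be a globally perinormal domain and $W$ a multiplicative subset of $R$. Then $R_W$ is globally perinormal.
   Context: All rings are commutative with identity; an overring of a domain $R$ is a ring between $R$ and its fraction field. A ring extension $A \subseteq B$ satisfies going-down if whenever $\mathfrak{p} \subset \mathfrak{q}$ are primes of $A$ and $Q$ is a prime of $B$ with $Q \cap A = \mathfrak{q}$, there is a prime $P \subseteq Q$ of $B$ with $P \cap A = \mathfrak{p}$. A domain $R$ is globally perinormal if every overring $S$ of $R$ such that $R \subseteq S$ satisfies going-down is a localization of $R$ at some multiplicative set. *)

theory Defs
  imports Main
begin

text \<open>Domains are modelled as subrings of a field K (the type 'a); every domain
arises this way (embed it in its fraction field), and all notions below are
invariant under ring isomorphism.\<close>

definition subring :: "'a::field set \<Rightarrow> bool" where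
  "subring A \<longleftrightarrow> 0 \<in> A \<and> 1 \<in> A \<and>
     (\<forall>x\<in>A. \<forall>y\<in>A. x + y \<in> A \<and> x * y \<in> A) \<and> (\<forall>x\<in>A. - x \<in> A)"

definition frac_field :: "'a::field set \<Rightarrow> 'a set" where
  "frac_field R = {a / b | a b. a \<in> R \<and> b \<in> R \<and> b \<noteq> 0}"

definition overring :: "'a::field set \<Rightarrow> 'a set \<Rightarrow> bool" where
  "overring R S \<longleftrightarrow> subring S \<and> R \<subseteq> S \<and> S \<subseteq> frac_field R"

definition prime_ideal_of :: "'a::field set \<Rightarrow> 'a set \<Rightarrow> bool" where
  "prime_ideal_of A P \<longleftrightarrow> P \<subseteq> A \<and> 0 \<in> P \<and>
     (\<forall>x\<in>P. \<forall>y\<in>P. x + y \<in> P) \<and>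
     (\<forall>a\<in>A. \<forall>x\<in>P. a * x \<in> P) \<and>
     P \<noteq> A \<and>
     (\<forall>a\<in>A. \<forall>b\<in>A. a * b \<in> P \<longrightarrow> a \<in> P \<or> b \<in> P)"

definition going_down :: "'a::field set \<Rightarrow> 'a set \<Rightarrow> bool" where
  "going_down A B \<longleftrightarrow>
     (\<forall>p q Q. prime_ideal_of A p \<longrightarrow> prime_ideal_of A q \<longrightarrow> p \<subseteq> q \<longrightarrow>
        prime_ideal_of B Q \<longrightarrow> Q \<inter> A = q \<longrightarrow>
        (\<exists>P. prime_ideal_of B P \<and> P \<subseteq> Q \<and> P \<inter> A = p))"

text \<open>Multiplicative subset of R (not containing 0, so that R_W is a domain).\<close>
definition mult_subset :: "'a::field set \<Rightarrow> 'a set \<Rightarrow> bool" where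
  "mult_subset R W \<longleftrightarrow> W \<subseteq> R \<and> 1 \<in> W \<and> 0 \<notin> W \<and>
     (\<forall>x\<in>W. \<forall>y\<in>W. x * y \<in> W)"

definition localization :: "'a::field set \<Rightarrow> 'a set \<Rightarrow> 'a set" where
  "localization R W = {a / w | a w. a \<in> R \<and> w \<in> W}"

definition globally_perinormal :: "'a::field set \<Rightarrow> bool" where
  "globally_perinormal R \<longleftrightarrow>
     (\<forall>S. overring R S \<longrightarrow> going_down R S \<longrightarrow>
        (\<exists>W. mult_subset R W \<and> S = localization R W))"

end

theory Submission imports Defs begin

text \<open>Let \<open>S\<close> be an overring of \<open>R\<^sub>W\<close> such that \<open>R\<^sub>W \<subseteq> S\<close> has going-down. Then \<open>S\<close> is an
overring of \<open>R\<close>, and \<open>R \<subseteq> S\<close> also has going-down: the elements of \<open>W\<close> are units of \<open>S\<close>, so a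
prime \<open>q\<close> of \<open>R\<close> lying under a prime of \<open>S\<close> misses \<open>W\<close>; any prime \<open>p \<subseteq> q\<close> then extends to
the prime \<open>p\<^sub>W\<close> of \<open>R\<^sub>W\<close>, which contracts back to \<open>p\<close>, and going-down for \<open>R\<^sub>W \<subseteq> S\<close> applies
to \<open>p\<^sub>W\<close>. Hence \<open>S = R\<^sub>U\<close> for some multiplicative \<open>U\<close>, and then also \<open>S = (R\<^sub>W)\<^sub>U\<close>.\<close>

lemma mult_subset_nonzero: "mult_subset R W \<Longrightarrow> w \<in> W \<Longrightarrow> w \<noteq> 0"
  unfolding mult_subset_def by auto

lemma mult_subset_mono: "mult_subset R W \<Longrightarrow> R \<subseteq> R' \<Longrightarrow> mult_subset R' W"
  unfolding mult_subset_def by blast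

lemma subset_localization:
  assumes "1 \<in> W" shows "R \<subseteq> localization R W"
proof
  fix r assume "r \<in> R"
  moreover have "r = r / 1" by simp
  ultimately show "r \<in> localization R W" using assms unfolding localization_def by blast
qed

lemma subset_localization_mult_subset: "mult_subset R W \<Longrightarrow> R \<subseteq> localization R W"
  using subset_localization[of W R] unfolding mult_subset_def by blast

lemma inverse_mem_localization:
  assumes "subring R" "w \<in> W" shows "1 / w \<in> localization R W"
  using assms unfolding localization_def subring_def by blast

lemma localizationI: "a \<in> R \<Longrightarrow> w \<in> W \<Longrightarrow> a / w \<in> localization R W"
  unfolding localization_def by blast

lemma subring_localization:
  assumes R: "subring R" and W: "mult_subset R W"
  shows "subring (localization R W)"
  unfolding subring_def
proof (intro conjI ballI)
  show "0 \<in> localization R W" "1 \<in> localization R W"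
    using subset_localization_mult_subset[OF W] R unfolding subring_def by blast+
next
  fix x y assume "x \<in> localization R W" "y \<in> localization R W"
  then obtain a w b v where h: "x = a / w" "a \<in> R" "w \<in> W" "y = b / v" "b \<in> R" "v \<in> W"
    unfolding localization_def by blast
  have "w \<noteq> 0" "v \<noteq> 0" using h mult_subset_nonzero[OF W] by auto
  then have "x + y = (a*v + b*w) / (w*v)" using h by (simp add: field_simps)
  moreover have "x * y = (a*b) / (w*v)" using h by simp
  moreover have "a*v + b*w \<in> R" "a*b \<in> R"
    using h R W unfolding subring_def mult_subset_def by blast+
  moreover have "w*v \<in> W" using h W unfolding mult_subset_def by blast
  ultimately show "x + y \<in> localization R W" "x * y \<in> localization R W"
    by (auto intro: localizationI)
next
  fix x assume "x \<in> localization R W"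
  then obtain a w where h: "x = a / w" "a \<in> R" "w \<in> W" unfolding localization_def by blast
  then have "- a \<in> R" using R unfolding subring_def by blast
  then show "- x \<in> localization R W" using localizationI[of "- a" R w W] h by simp
qed

lemma localization_subset_frac_field:
  assumes "mult_subset R W" shows "localization R W \<subseteq> frac_field R"
  using assms unfolding localization_def frac_field_def mult_subset_def by blast

lemma frac_field_subset_frac_field:
  assumes R: "subring R" and R': "R' \<subseteq> frac_field R"
  shows "frac_field R' \<subseteq> frac_field R"
proof
  fix s assume "s \<in> frac_field R'"
  then obtain x y where xy: "s = x / y" "x \<in> R'" "y \<in> R'" "y \<noteq> 0"
    unfolding frac_field_def by blast
  obtain a b c d where abcd: "x = a / b" "y = c / d" "a \<in> R" "b \<in> R" "c \<in> R" "d \<in> R"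
    "b \<noteq> 0" "d \<noteq> 0"
    using xy(2,3) R' unfolding frac_field_def by blast
  have "c \<noteq> 0" using xy(4) abcd by auto
  then have "s = (a * d) / (b * c)" "b * c \<noteq> 0" using xy abcd by (simp_all add: field_simps)
  moreover have "a * d \<in> R" "b * c \<in> R" using R abcd unfolding subring_def by auto
  ultimately show "s \<in> frac_field R" unfolding frac_field_def by blast
qed

lemma overring_of_overring_localization:
  assumes "subring R" "mult_subset R W" "overring (localization R W) S"
  shows "overring R S"
proof -
  have "localization R W \<subseteq> frac_field R" using localization_subset_frac_field[OF assms(2)] .
  then have "frac_field (localization R W) \<subseteq> frac_field R"
    using frac_field_subset_frac_field[OF assms(1)] by blast
  moreover have "R \<subseteq> localization R W" using subset_localization_mult_subset[OF assms(2)] .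
  ultimately show ?thesis using assms(3) unfolding overring_def by blast
qed

lemma localization_localization:
  assumes W: "mult_subset R W" and "R \<subseteq> R'" "R' \<subseteq> localization R W"
  shows "localization R' W = localization R W"
proof
  show "localization R W \<subseteq> localization R' W"
    using \<open>R \<subseteq> R'\<close> unfolding localization_def by blast
  show "localization R' W \<subseteq> localization R W"
  proof
    fix x assume "x \<in> localization R' W"
    then obtain a v w where h: "x = (a / v) / w" "a \<in> R" "v \<in> W" "w \<in> W"
      using \<open>R' \<subseteq> localization R W\<close> unfolding localization_def by blast
    then have "x = a / (v * w)" by simp
    moreover have "v * w \<in> W" using W h unfolding mult_subset_def by blast
    ultimately show "x \<in> localization R W" using h unfolding localization_def by blast
  qed
qed

lemma one_notin_prime_ideal:
  assumes "subring S" "prime_ideal_of S Q" shows "(1::'a::field) \<notin> Q"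
proof
  assume "1 \<in> Q"
  then have "S \<subseteq> Q" using assms unfolding prime_ideal_of_def by (metis mult.right_neutral subsetI)
  then show False using assms unfolding prime_ideal_of_def by auto
qed

lemma prime_ideal_of_contraction:
  assumes "subring S" "prime_ideal_of S Q" "subring A" "A \<subseteq> S"
  shows "prime_ideal_of A (Q \<inter> A)"
proof -
  have "1 \<notin> Q" using one_notin_prime_ideal assms by blast
  moreover have "1 \<in> A" using assms(3) unfolding subring_def by blast
  ultimately have "Q \<inter> A \<noteq> A" by blast
  moreover have "0 \<in> A" using assms(3) unfolding subring_def by blast
  ultimately show ?thesis using assms unfolding prime_ideal_of_def subring_def
    by (simp add: subset_iff)
qed

lemma mult_mem_localization_ideal:
  assumes W: "mult_subset R W" and p: "\<forall>r\<in>R. \<forall>a\<in>p. r * a \<in> p"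
    and "x \<in> localization R W" "y \<in> localization p W"
  shows "x * y \<in> localization p W"
proof -
  obtain b v a w where h: "x = b / v" "b \<in> R" "v \<in> W" "y = a / w" "a \<in> p" "w \<in> W"
    using assms(3,4) unfolding localization_def by blast
  then have "x * y = (b * a) / (v * w)" by simp
  moreover have "b * a \<in> p" using p h by blast
  moreover have "v * w \<in> W" using W h unfolding mult_subset_def by blast
  ultimately show ?thesis by (simp add: localizationI)
qed

lemma localization_prime_inter:
  assumes W: "mult_subset R W" and p: "prime_ideal_of R p" and disj: "p \<inter> W = {}"
  shows "localization p W \<inter> R = p"
proof
  show "p \<subseteq> localization p W \<inter> R"
    using subset_localization[of W p] W p unfolding mult_subset_def prime_ideal_of_def by blast
  show "localization p W \<inter> R \<subseteq> p"
  proof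
    fix r assume "r \<in> localization p W \<inter> R"
    then obtain a w where h: "r = a / w" "a \<in> p" "w \<in> W" "r \<in> R"
      unfolding localization_def by blast
    then have "w * r \<in> p" using mult_subset_nonzero[OF W] by simp
    moreover have "w \<in> R" "w \<notin> p" using W h disj unfolding mult_subset_def by blast+
    ultimately show "r \<in> p" using p h(4) unfolding prime_ideal_of_def by blast
  qed
qed

lemma prime_ideal_of_localization:
  assumes R: "subring R" and W: "mult_subset R W" and p: "prime_ideal_of R p"
    and disj: "p \<inter> W = {}"
  shows "prime_ideal_of (localization R W) (localization p W)"
proof -
  have p_ideal: "\<forall>r\<in>R. \<forall>a\<in>p. r * a \<in> p" and p_add: "\<forall>a\<in>p. \<forall>b\<in>p. a + b \<in> p"
    and p_prime: "\<forall>a\<in>R. \<forall>b\<in>R. a * b \<in> p \<longrightarrow> a \<in> p \<or> b \<in> p" and "p \<subseteq> R"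
    using p unfolding prime_ideal_of_def by blast+
  have W_mult: "\<forall>w\<in>W. \<forall>v\<in>W. w * v \<in> W" and "W \<subseteq> R"
    using W unfolding mult_subset_def by blast+
  have contract: "localization p W \<inter> R = p" using localization_prime_inter[OF W p disj] .
  show ?thesis unfolding prime_ideal_of_def
  proof (intro conjI ballI impI)
    show "localization p W \<subseteq> localization R W"
      using \<open>p \<subseteq> R\<close> unfolding localization_def by blast
    show "0 \<in> localization p W"
      using subset_localization[of W p] W p unfolding mult_subset_def prime_ideal_of_def by blast
  next
    fix x y assume "x \<in> localization p W" "y \<in> localization p W"
    then obtain a w b v where h: "x = a / w" "a \<in> p" "w \<in> W" "y = b / v" "b \<in> p" "v \<in> W"
      unfolding localization_def by blast
    have "w \<noteq> 0" "v \<noteq> 0" using h mult_subset_nonzero[OF W] by auto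
    then have "x + y = (v * a + w * b) / (w * v)" using h by (simp add: field_simps)
    moreover have "v * a \<in> p" "w * b \<in> p" using p_ideal \<open>W \<subseteq> R\<close> h by blast+
    then have "v * a + w * b \<in> p" using p_add by blast
    moreover have "w * v \<in> W" using W_mult h by blast
    ultimately show "x + y \<in> localization p W" by (simp add: localizationI)
  next
    fix r x assume "r \<in> localization R W" "x \<in> localization p W"
    then show "r * x \<in> localization p W" using mult_mem_localization_ideal[OF W p_ideal] by blast
  next
    have "1 \<in> R" using R unfolding subring_def by blast
    moreover have "1 \<notin> p" using one_notin_prime_ideal[OF R p] .
    ultimately show "localization p W \<noteq> localization R W"
      using contract subset_localization_mult_subset[OF W] by blast
  next
    fix x y assume xy: "x \<in> localization R W" "y \<in> localization R W" "x * y \<in> localization p W"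
    obtain a w b v where h: "x = a / w" "a \<in> R" "w \<in> W" "y = b / v" "b \<in> R" "v \<in> W"
      using xy(1,2) unfolding localization_def by blast
    have "w * v \<in> localization R W"
      using h W_mult \<open>W \<subseteq> R\<close> subset_localization_mult_subset[OF W] by blast
    then have "(w * v) * (x * y) \<in> localization p W"
      using mult_mem_localization_ideal[OF W p_ideal] xy(3) by blast
    moreover have "(w * v) * (x * y) = a * b"
      using h mult_subset_nonzero[OF W h(3)] mult_subset_nonzero[OF W h(6)] by simp
    moreover have "a * b \<in> R" using R h(2,5) unfolding subring_def by blast
    ultimately have "a * b \<in> localization p W \<inter> R" by simp
    then have "a * b \<in> p" by (simp only: contract)
    then have "a \<in> p \<or> b \<in> p" using p_prime h(2,5) by blast
    then show "x \<in> localization p W \<or> y \<in> localization p W"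
      unfolding h(1,4) using localizationI h(3,6) by blast
  qed
qed

lemma mult_subset_disjoint_prime_ideal:
  assumes R: "subring R" and W: "mult_subset R W" and S: "subring S"
    and RS: "localization R W \<subseteq> S" and Q: "prime_ideal_of S Q"
  shows "W \<inter> Q = {}"
proof (rule ccontr)
  assume "W \<inter> Q \<noteq> {}"
  then obtain w where w: "w \<in> W" "w \<in> Q" by blast
  have "1 / w \<in> S" using inverse_mem_localization[OF R w(1)] RS by blast
  then have "(1 / w) * w \<in> Q" using Q w(2) unfolding prime_ideal_of_def by blast
  moreover have "(1 / w) * w = 1" using mult_subset_nonzero[OF W w(1)] by simp
  ultimately show False using one_notin_prime_ideal[OF S Q] by simp
qed

lemma going_down_of_going_down_localization:
  assumes R: "subring R" and W: "mult_subset R W" and S: "subring S"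
    and RS: "localization R W \<subseteq> S" and gd: "going_down (localization R W) S"
  shows "going_down R S"
  unfolding going_down_def
proof (intro allI impI)
  fix p q Q
  assume p: "prime_ideal_of R p" and "prime_ideal_of R q" and "p \<subseteq> q"
    and Q: "prime_ideal_of S Q" and Qq: "Q \<inter> R = q"
  have "p \<subseteq> Q" using \<open>p \<subseteq> q\<close> Qq by blast
  then have "p \<inter> W = {}" using mult_subset_disjoint_prime_ideal[OF R W S RS Q] by blast
  then have p': "prime_ideal_of (localization R W) (localization p W)"
    and contract: "localization p W \<inter> R = p"
    using prime_ideal_of_localization[OF R W p] localization_prime_inter[OF W p] by blast+
  have Q': "prime_ideal_of (localization R W) (Q \<inter> localization R W)"
    using prime_ideal_of_contraction[OF S Q subring_localization[OF R W] RS] .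
  have "localization p W \<subseteq> Q"
  proof
    fix x assume "x \<in> localization p W"
    then obtain a w where h: "x = a / w" "a \<in> p" "w \<in> W" unfolding localization_def by blast
    have "1 / w \<in> S" using inverse_mem_localization[OF R h(3)] RS by blast
    then have "(1 / w) * a \<in> Q" using Q \<open>p \<subseteq> Q\<close> h(2) unfolding prime_ideal_of_def by blast
    then show "x \<in> Q" using h(1) by simp
  qed
  then have "localization p W \<subseteq> Q \<inter> localization R W"
    using p' unfolding prime_ideal_of_def by blast
  then obtain P where P: "prime_ideal_of S P" "P \<subseteq> Q" "P \<inter> localization R W = localization p W"
    using gd p' Q' Q unfolding going_down_def by blast
  have "P \<inter> R = p"
    using P(3) contract subset_localization_mult_subset[OF W] by blast
  then show "\<exists>P. prime_ideal_of S P \<and> P \<subseteq> Q \<and> P \<inter> R = p" using P(1,2) by blast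
qed

theorem proposition6p1:
  fixes R W :: "'a::field set"
  assumes "subring R"
    and "globally_perinormal R"
    and "mult_subset R W"
  shows "globally_perinormal (localization R W)"
  unfolding globally_perinormal_def
proof (intro allI impI)
  fix S assume ov: "overring (localization R W) S" and gd: "going_down (localization R W) S"
  have "overring R S" using overring_of_overring_localization[OF assms(1,3) ov] .
  moreover have "going_down R S"
    using going_down_of_going_down_localization[OF assms(1,3) _ _ gd] ov
    unfolding overring_def by blast
  ultimately obtain U where U: "mult_subset R U" "S = localization R U"
    using assms(2) unfolding globally_perinormal_def by blast
  have RR': "R \<subseteq> localization R W" using subset_localization_mult_subset[OF assms(3)] .
  have "localization (localization R W) U = S"
    using localization_localization[OF U(1) RR'] ov U(2) unfolding overring_def by blast
  then show "\<exists>V. mult_subset (localization R W) V \<and> S = localization (localization R W) V"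
    using mult_subset_mono[OF U(1) RR'] by blast
qed

end
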